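(* For every $n\in\mathbb N$, $C_{L_n}\le C_{L_{n+1}}$.
   Context: $L_n$ is the path graph with vertices $\{1,\dots,n\}$ and edges $\{j,j+1\}$, with distance $|i-j|$. A measure on $L_n$ is a weight function $\mu:\{1,\dots,n\}\to(0,\infty)$, $\mu(A)=\sum_{v\in A}\mu(v)$. Closed balls: $B(x,r)=\{y:|x-y|\le r\}$. $C_\mu=\sup\{\mu(B(x,2k+1))/\mu(B(x,k)):1\le x\le n,\ k\ge0\}$ and $C_{L_n}=\inf_\mu C_\mu$. *)

theory Defs
  imports "HOL-Analysis.Analysis"
begin

text \<open>Path graph L_n: vertex set {1..n}, distance |i - j|.\<close>

definition path_ball :: "nat \<Rightarrow> nat \<Rightarrow> nat \<Rightarrow> nat set" where
  "path_ball n x r = {y \<in> {1..n}. nat \<bar>int x - int y\<bar> \<le> r}"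

definition path_measure :: "(nat \<Rightarrow> real) \<Rightarrow> nat set \<Rightarrow> real" where
  "path_measure \<mu> A = (\<Sum>v\<in>A. \<mu> v)"

text \<open>A measure on L_n: strictly positive weights on {1..n}
  (values outside {1..n} are irrelevant).\<close>
definition is_path_measure :: "nat \<Rightarrow> (nat \<Rightarrow> real) \<Rightarrow> bool" where
  "is_path_measure n \<mu> \<longleftrightarrow> (\<forall>v\<in>{1..n}. \<mu> v > 0)"

definition doubling_const :: "nat \<Rightarrow> (nat \<Rightarrow> real) \<Rightarrow> real" where
  "doubling_const n \<mu> =
     Sup {path_measure \<mu> (path_ball n x (2*k+1)) / path_measure \<mu> (path_ball n x k)
          | x k. x \<in> {1..n}}"

definition path_doubling_const :: "nat \<Rightarrow> real" where
  "path_doubling_const n = Inf (doubling_const n ` {\<mu>. is_path_measure n \<mu>})"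

end

(*
  Let w be a measure on L_(n+1) with doubling constant c. If c >= 3, the counting measure
  on L_n does at least as well, its constant being at most 3. If c < 3, the case k = 0 of
  the doubling inequality gives w(j-1) + w(j+1) <= (c-1) w(j) <= 2 w(j): the weight is
  concave, hence unimodal with a heaviest vertex m. Delete m. A ball B(y,k) of L_n then
  becomes the interval [y-k, y+k+1] of L_(n+1) with its heaviest point removed, and the
  doubling inequality for such punctured intervals follows from the doubling inequalities
  of w centred at y and at y+1; when m lies inside the small interval, concavity controls
  the two tails outside it.
*)
theory Submission
  imports Defs
begin

definition skip :: "nat \<Rightarrow> nat \<Rightarrow> nat" where
  "skip m i = (if i < m then i else Suc i)"

text \<open>\<open>max a (min m b)\<close> is the point of \<open>[a, b]\<close> nearest to \<open>m\<close>.\<close>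

lemma bij_betw_skip:
  assumes "a \<le> b"
  shows "bij_betw (skip m) {a..<b} ({a..b} - {max a (min m b)})"
proof (rule bij_betw_imageI)
  show "inj_on (skip m) {a..<b}"
    by (rule inj_onI) (auto simp: skip_def split: if_splits)
  show "skip m ` {a..<b} = {a..b} - {max a (min m b)}"
  proof (rule set_eqI)
    fix j
    show "j \<in> skip m ` {a..<b} \<longleftrightarrow> j \<in> {a..b} - {max a (min m b)}"
    proof
      assume "j \<in> {a..b} - {max a (min m b)}"
      then have "j < m \<and> j \<in> {a..<b} \<or> m < j \<and> j - 1 \<in> {a..<b}"
        using assms by auto
      then show "j \<in> skip m ` {a..<b}"
        by (auto simp: skip_def image_iff intro: bexI[of _ "j - 1"])
    qed (use assms in \<open>auto simp: skip_def split: if_splits\<close>)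
  qed
qed

lemma sum_skip:
  fixes V :: "nat \<Rightarrow> 'a::ab_group_add"
  assumes "a \<le> b"
  shows "(\<Sum>i\<in>{a..<b}. V (skip m i)) = (\<Sum>i\<in>{a..b}. V i) - V (max a (min m b))"
proof -
  have "max a (min m b) \<in> {a..b}" using assms by auto
  then show ?thesis
    using sum.reindex_bij_betw[OF bij_betw_skip[OF assms], of V] by (simp add: sum_diff1)
qed

text \<open>Truncated subtraction in \<open>z - r\<close> is harmless since \<open>V 0 = 0\<close>.\<close>

locale small_doubling_weight =
  fixes M :: nat and V :: "nat \<Rightarrow> real" and c :: real and m :: nat
  assumes nonneg: "0 \<le> V i"
    and zero_outside: "i \<notin> {1..M} \<Longrightarrow> V i = 0"
    and doubling: "z \<in> {1..M} \<Longrightarrow>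
      (\<Sum>i\<in>{z-(2*r+1)..z+(2*r+1)}. V i) \<le> c * (\<Sum>i\<in>{z-r..z+r}. V i)"
    and doubling_le_3: "c \<le> 3"
    and m_le_M: "m \<le> M"
    and le_max: "V i \<le> V m"
begin

lemma local_doubling:
  assumes "j \<in> {1..M}"
  shows "V (j-1) + V (Suc j) \<le> (c-1) * V j"
proof -
  have "(\<Sum>i\<in>{j-1..Suc j}. V i) = V (j-1) + V j + V (Suc j)"
    using assms by (cases j) auto
  then show ?thesis
    using doubling[OF assms, of 0] by (simp add: algebra_simps)
qed

lemma concave:
  assumes "j \<in> {1..M}"
  shows "V (j-1) + V (Suc j) \<le> 2 * V j"
  using local_doubling[OF assms, unfolded left_diff_distrib]
    mult_right_mono[OF doubling_le_3 nonneg[of j]] by linarith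

lemma increment_antimono:
  assumes "l \<le> l'" "l' \<le> M"
  shows "V (Suc l') - V l' \<le> V (Suc l) - V l"
  using assms
proof (induction l' rule: dec_induct)
  case (step l')
  then show ?case using concave[of "Suc l'"] by simp
qed simp

lemma mono_below_max:
  assumes "i \<le> j" "j \<le> m"
  shows "V i \<le> V j"
  using assms
proof (induction j rule: dec_induct)
  case (step l)
  have "V m - V (m-1) \<le> V (Suc l) - V l"
    using increment_antimono[of l "m-1"] step m_le_M by simp
  then show ?case using step le_max[of "m-1"] by simp
qed simp

lemma antimono_above_max:
  assumes "m \<le> i" "i \<le> j"
  shows "V j \<le> V i"
  using assms(2)
proof (induction j rule: dec_induct)
  case (step l)
  have "V (Suc l) \<le> V l"
  proof (cases "l \<le> M")
    case True
    then have "V (Suc l) - V l \<le> V (Suc m) - V m"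
      using increment_antimono[of m l] assms step by simp
    then show ?thesis using le_max[of "Suc m"] by simp
  next
    case False
    then show ?thesis using zero_outside[of l] zero_outside[of "Suc l"] by simp
  qed
  then show ?case using step by simp
qed simp

lemma le_nearest_to_max:
  assumes "a \<le> j" "j \<le> b"
  shows "V j \<le> V (max a (min m b))"
proof -
  consider "b \<le> m" | "m \<le> a" | "a < m" "m < b" by linarith
  then show ?thesis
    by cases (use assms mono_below_max[of j b] antimono_above_max[of a j] le_max[of j] in simp_all)
qed

lemma chord_slope:
  assumes "i \<le> j" "j \<le> k" "k \<le> Suc M"
  shows "(V k - V j) * real (j - i) \<le> (V j - V i) * real (k - j)"
proof (cases "i = j")
  case False
  define d where "d = V j - V (j-1)"
  have "V k - V j = (\<Sum>l=j..<k. V (Suc l) - V l)"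
    using assms by (simp add: sum_Suc_diff')
  also have "\<dots> \<le> (\<Sum>l=j..<k. d)"
    using False assms increment_antimono[of "j-1"] by (intro sum_mono) (auto simp: d_def)
  finally have right: "V k - V j \<le> real (k - j) * d" by simp
  have "(\<Sum>l=i..<j. d) \<le> (\<Sum>l=i..<j. V (Suc l) - V l)"
    using False assms increment_antimono[of _ "j-1"] by (intro sum_mono) (auto simp: d_def)
  also have "\<dots> = V j - V i"
    using assms by (simp add: sum_Suc_diff')
  finally have left: "real (j - i) * d \<le> V j - V i" by simp
  have "(V k - V j) * real (j - i) \<le> (real (k - j) * d) * real (j - i)"
    using right by (simp add: mult_right_mono)
  also have "\<dots> = (real (j - i) * d) * real (k - j)" by simp
  also have "\<dots> \<le> (V j - V i) * real (k - j)"
    using left by (simp add: mult_right_mono)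
  finally show ?thesis .
qed simp

lemma steep_left:
  assumes "i \<le> j" "j \<le> m" "2 * (m - j) \<le> j - i"
  shows "c * (V m - V j) \<le> V m - V i"
proof (cases "i = j")
  case False
  have "(V m - V j) * real (j - i) \<le> (V j - V i) * real (m - j)"
    using chord_slope[of i j m] assms m_le_M by simp
  also have "\<dots> \<le> (V j - V i) * (real (j - i) / 2)"
    using assms mono_below_max[of i j] by (intro mult_left_mono) auto
  finally have "(2 * (V m - V j)) * real (j - i) \<le> (V j - V i) * real (j - i)"
    by (simp add: algebra_simps)
  then have "2 * (V m - V j) \<le> V j - V i"
    using False assms by (simp add: mult_le_cancel_right)
  moreover have "c * (V m - V j) \<le> 3 * (V m - V j)"
    using doubling_le_3 le_max[of j] by (intro mult_right_mono) auto
  ultimately show ?thesis by argo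
qed (use assms in simp)

lemma steep_right:
  assumes "m \<le> j" "j \<le> k" "k \<le> Suc M" "2 * (j - m) \<le> k - j"
  shows "c * (V m - V j) \<le> V m - V k"
proof (cases "j = k")
  case False
  have "(V m - V j) * real (k - j) \<le> (V j - V k) * real (j - m)"
    using chord_slope[of m j k] assms by (simp add: algebra_simps)
  also have "\<dots> \<le> (V j - V k) * (real (k - j) / 2)"
    using assms antimono_above_max[of j k] by (intro mult_left_mono) auto
  finally have "(2 * (V m - V j)) * real (k - j) \<le> (V j - V k) * real (k - j)"
    by (simp add: algebra_simps)
  then have "2 * (V m - V j) \<le> V j - V k"
    using False assms by (simp add: mult_le_cancel_right)
  moreover have "c * (V m - V j) \<le> 3 * (V m - V j)"
    using doubling_le_3 le_max[of j] by (intro mult_right_mono) auto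
  ultimately show ?thesis by argo
qed (use assms in simp)

lemma left_tail:
  assumes "s \<le> p" "p \<le> m"
  shows "(\<Sum>i\<in>{s..<p}. V i) \<le> (c-1) * (\<Sum>i\<in>{p..<m}. V i) \<or> c * (V m - V p) \<le> V m - V s"
proof (cases "p - s \<le> 2 * (m - p)")
  case True
  have "\<forall>i\<in>{s..<p}. V i \<le> V (p-1)"
    using assms by (intro ballI mono_below_max) auto
  then have "(\<Sum>i\<in>{s..<p}. V i) \<le> real (p - s) * V (p-1)"
    using sum_bounded_above[of "{s..<p}" V "V (p-1)"] by simp
  also have "\<dots> \<le> real (m - p) * (2 * V (p-1))"
    using True nonneg[of "p-1"] mult_right_mono[of "real (p - s)" "2 * real (m - p)" "V (p-1)"]
    by simp
  also have "\<dots> = real (card {p..<m}) * (2 * V (p-1))"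
    by simp
  also have "\<dots> \<le> (\<Sum>i\<in>{p..<m}. (c-1) * V i)"
  proof (rule sum_bounded_below)
    fix i assume "i \<in> {p..<m}"
    then have i: "p \<le> i" "i < m" by auto
    show "2 * V (p-1) \<le> (c-1) * V i"
    proof (cases "i = 0")
      case True
      then show ?thesis using i zero_outside[of 0] by simp
    next
      case False
      then have "V (i-1) + V (Suc i) \<le> (c-1) * V i"
        using i m_le_M by (intro local_doubling) auto
      moreover have "V (p-1) \<le> V (i-1)" "V (p-1) \<le> V (Suc i)"
        using i by (auto intro: mono_below_max)
      ultimately show ?thesis by linarith
    qed
  qed
  finally show ?thesis by (simp add: sum_distrib_left)
qed (use steep_left[of s p] assms in simp)

lemma right_tail:
  assumes "m \<le> q" "q \<le> t"
  shows "(\<Sum>i\<in>{q<..t}. V i) \<le> (c-1) * (\<Sum>i\<in>{m<..q}. V i) \<or> c * (V m - V q) \<le> V m - V t"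
proof (cases "min t M - q \<le> 2 * (q - m)")
  case True
  have "(\<Sum>i\<in>{q<..t}. V i) = (\<Sum>i\<in>{q<..min t M}. V i)"
    by (rule sum.mono_neutral_right) (auto intro: zero_outside)
  also have "\<dots> \<le> real (min t M - q) * V (Suc q)"
    using sum_bounded_above[of "{q<..min t M}" V "V (Suc q)"] antimono_above_max assms by simp
  also have "\<dots> \<le> real (q - m) * (2 * V (Suc q))"
    using True nonneg[of "Suc q"]
      mult_right_mono[of "real (min t M - q)" "2 * real (q - m)" "V (Suc q)"]
    by simp
  also have "\<dots> = real (card {m<..q}) * (2 * V (Suc q))"
    by simp
  also have "\<dots> \<le> (\<Sum>i\<in>{m<..q}. (c-1) * V i)"
  proof (rule sum_bounded_below)
    fix i assume "i \<in> {m<..q}"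
    then have i: "m < i" "i \<le> q" by auto
    show "2 * V (Suc q) \<le> (c-1) * V i"
    proof (cases "i \<le> M")
      case False
      then show ?thesis using i zero_outside[of i] zero_outside[of "Suc q"] by simp
    next
      case True
      then have "V (i-1) + V (Suc i) \<le> (c-1) * V i"
        using i by (intro local_doubling) auto
      moreover have "V (Suc q) \<le> V (i-1)" "V (Suc q) \<le> V (Suc i)"
        using i by (auto intro: antimono_above_max)
      ultimately show ?thesis by linarith
    qed
  qed
  finally show ?thesis by (simp add: sum_distrib_left)
next
  case False
  define k where "k = min t (Suc M)"
  have "V k = V t"
    using zero_outside[of t] zero_outside[of "Suc M"] by (cases "t \<le> Suc M") (auto simp: k_def)
  moreover have "c * (V m - V q) \<le> V m - V k"
    using False assms by (intro steep_right) (auto simp: k_def)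
  ultimately show ?thesis by simp
qed

text \<open>For \<open>[p, q] = [y-k, y+k+1]\<close> and \<open>[s, t] = [y-2k-1, y+2k+2]\<close>, the two hypotheses
  are the doubling inequalities centred at \<open>y\<close> and at \<open>y+1\<close>.\<close>

lemma doubling_without_max:
  assumes "s \<le> p" "p \<le> q" "q \<le> t"
    and right_end: "(\<Sum>i\<in>{s..t}. V i) - V t \<le> c * ((\<Sum>i\<in>{p..q}. V i) - V q)"
    and left_end: "(\<Sum>i\<in>{s..t}. V i) - V s \<le> c * ((\<Sum>i\<in>{p..q}. V i) - V p)"
  shows "(\<Sum>i\<in>{s..t}. V i) - V (max s (min m t))
    \<le> c * ((\<Sum>i\<in>{p..q}. V i) - V (max p (min m q)))"
proof -
  consider "m < p" | "q < m" | "p \<le> m" "m \<le> q" by linarith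
  then show ?thesis
  proof cases
    case 1
    then show ?thesis using left_end le_nearest_to_max[of s s t] assms by simp
  next
    case 2
    then show ?thesis using right_end le_nearest_to_max[of s t t] assms by simp
  next
    case 3
    let ?L = "\<Sum>i\<in>{p..<m}. V i" and ?R = "\<Sum>i\<in>{m<..q}. V i"
    let ?Lo = "\<Sum>i\<in>{s..<p}. V i" and ?Ro = "\<Sum>i\<in>{q<..t}. V i"
    have inner: "(\<Sum>i\<in>{p..q}. V i) = ?L + V m + ?R"
    proof -
      have "{p..q} = {p..<m} \<union> insert m {m<..q}" "{p..<m} \<inter> insert m {m<..q} = {}"
        using 3 by auto
      then show ?thesis by (simp add: sum.union_disjoint add.assoc)
    qed
    have outer: "(\<Sum>i\<in>{s..t}. V i) = ?Lo + (\<Sum>i\<in>{p..q}. V i) + ?Ro"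
    proof -
      have "{s..t} = {s..<p} \<union> ({p..q} \<union> {q<..t})"
        "{s..<p} \<inter> ({p..q} \<union> {q<..t}) = {}" "{p..q} \<inter> {q<..t} = {}"
        using assms by auto
      then show ?thesis by (simp add: sum.union_disjoint add.assoc)
    qed
    have "(\<Sum>i\<in>{s..t}. V i) - V m \<le> c * ((\<Sum>i\<in>{p..q}. V i) - V m)"
    proof -
      have "c * (V m - V p) \<le> V m - V s \<Longrightarrow> ?thesis"
        using left_end by (simp add: algebra_simps)
      moreover have "c * (V m - V q) \<le> V m - V t \<Longrightarrow> ?thesis"
        using right_end by (simp add: algebra_simps)
      moreover have "?Lo \<le> (c-1) * ?L \<Longrightarrow> ?Ro \<le> (c-1) * ?R \<Longrightarrow> ?thesis"
        using inner outer by (simp add: algebra_simps)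
      ultimately show ?thesis
        using left_tail[of s p] right_tail[of q t] 3 assms by blast
    qed
    moreover have "max s (min m t) = m" "max p (min m q) = m"
      using 3 assms by auto
    ultimately show ?thesis by simp
  qed
qed

lemma sum_from_Suc_diff:
  assumes "x - d \<le> b"
  shows "(\<Sum>i\<in>{Suc x - d..b}. V i) = (\<Sum>i\<in>{x - d..b}. V i) - V (x - d)"
proof (cases "d \<le> x")
  case True
  then have "Suc x - d = Suc (x - d)" by simp
  then show ?thesis using assms sum.atLeast_Suc_atMost[of "x - d" b V] by simp
qed (use zero_outside[of 0] in simp)

lemma doubling_without_max_ball:
  assumes "y \<in> {1..<M}"
  shows "(\<Sum>i\<in>{y-(2*k+1)..Suc (y+(2*k+1))}. V i) - V (max (y-(2*k+1)) (min m (Suc (y+(2*k+1)))))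
    \<le> c * ((\<Sum>i\<in>{y-k..Suc (y+k)}. V i) - V (max (y-k) (min m (Suc (y+k)))))"
proof (rule doubling_without_max)
  show "(\<Sum>i\<in>{y-(2*k+1)..Suc (y+(2*k+1))}. V i) - V (Suc (y+(2*k+1)))
    \<le> c * ((\<Sum>i\<in>{y-k..Suc (y+k)}. V i) - V (Suc (y+k)))"
  proof -
    have split: "(\<Sum>i\<in>{a..Suc b}. V i) = (\<Sum>i\<in>{a..b}. V i) + V (Suc b)" if "a \<le> Suc b" for a b
      using that by simp
    show ?thesis
      using doubling[of y k] assms split[of "y-(2*k+1)" "y+(2*k+1)"] split[of "y-k" "y+k"]
      by (simp del: sum.cl_ivl_Suc)
  qed
  show "(\<Sum>i\<in>{y-(2*k+1)..Suc (y+(2*k+1))}. V i) - V (y-(2*k+1))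
    \<le> c * ((\<Sum>i\<in>{y-k..Suc (y+k)}. V i) - V (y-k))"
    using doubling[of "Suc y" k] assms sum_from_Suc_diff[of y "2*k+1" "Suc (y+(2*k+1))"]
      sum_from_Suc_diff[of y k "Suc (y+k)"]
    by (simp del: sum.cl_ivl_Suc)
qed auto

end

definition zero_extension :: "nat \<Rightarrow> (nat \<Rightarrow> real) \<Rightarrow> nat \<Rightarrow> real" where
  "zero_extension N w i = (if i \<in> {1..N} then w i else 0)"

lemma path_measure_ball_eq_sum:
  "path_measure w (path_ball N x r) = (\<Sum>i\<in>{x-r..x+r}. zero_extension N w i)"
proof -
  have "path_ball N x r = {x-r..x+r} \<inter> {1..N}"
    unfolding path_ball_def by auto
  then show ?thesis
    using sum.inter_restrict[of "{x-r..x+r}" w "{1..N}"]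
    unfolding path_measure_def zero_extension_def by simp
qed

lemma path_ball_subset: "path_ball N x r \<subseteq> {1..N}"
  unfolding path_ball_def by auto

lemma path_ball_mono: "r \<le> r' \<Longrightarrow> path_ball N x r \<subseteq> path_ball N x r'"
  unfolding path_ball_def by auto

lemma path_measure_mono:
  assumes "is_path_measure N w" "A \<subseteq> B" "B \<subseteq> {1..N}"
  shows "path_measure w A \<le> path_measure w B"
  unfolding path_measure_def using assms finite_subset[OF _ finite_atLeastAtMost]
  by (intro sum_mono2) (auto simp: is_path_measure_def less_imp_le)

lemma weight_le_path_measure_ball:
  assumes "is_path_measure N w" "x \<in> {1..N}"
  shows "w x \<le> path_measure w (path_ball N x r)"
proof -
  have "x \<in> path_ball N x r"
    using assms(2) by (simp add: path_ball_def)
  then show ?thesis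
    using path_measure_mono[OF assms(1), of "{x}" "path_ball N x r"] path_ball_subset
    by (simp add: path_measure_def)
qed

lemma path_measure_ball_pos:
  assumes "is_path_measure N w" "x \<in> {1..N}"
  shows "0 < path_measure w (path_ball N x r)"
proof -
  have "0 < w x"
    using assms by (simp add: is_path_measure_def)
  then show ?thesis
    using weight_le_path_measure_ball[OF assms] by (rule less_le_trans)
qed

lemma doubling_ratios_bdd_above:
  assumes "is_path_measure N w"
  shows "bdd_above {path_measure w (path_ball N x (2*k+1)) / path_measure w (path_ball N x k)
    | x k. x \<in> {1..N}}"
proof (rule bdd_aboveI, safe)
  fix x k assume x: "x \<in> {1..N}"
  have "0 < Min (w ` {1..N})"
    using assms x by (subst Min_gr_iff) (auto simp: is_path_measure_def)
  moreover have "Min (w ` {1..N}) \<le> path_measure w (path_ball N x k)"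
    using weight_le_path_measure_ball[OF assms x] x by (meson Min_le finite_atLeastAtMost
      finite_imageI image_eqI order_trans)
  moreover have "path_measure w (path_ball N x (2*k+1)) \<le> path_measure w {1..N}"
    using path_measure_mono[OF assms path_ball_subset] by simp
  moreover have "0 \<le> path_measure w {1..N}"
    using assms by (auto simp: path_measure_def is_path_measure_def intro: sum_nonneg less_imp_le)
  ultimately show "path_measure w (path_ball N x (2*k+1)) / path_measure w (path_ball N x k)
    \<le> path_measure w {1..N} / Min (w ` {1..N})"
    using path_measure_ball_pos[OF assms x] by (intro frac_le) auto
qed

lemma path_measure_ball_le_doubling_const:
  assumes "is_path_measure N w" "x \<in> {1..N}"
  shows "path_measure w (path_ball N x (2*k+1)) \<le> doubling_const N w * path_measure w (path_ball N x k)"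
proof -
  have "path_measure w (path_ball N x (2*k+1)) / path_measure w (path_ball N x k)
    \<le> doubling_const N w"
    unfolding doubling_const_def
    using assms doubling_ratios_bdd_above[OF assms(1)] by (intro cSup_upper) auto
  then show ?thesis
    using path_measure_ball_pos[OF assms] by (simp add: pos_divide_le_eq)
qed

lemma doubling_const_le:
  assumes "1 \<le> N" "is_path_measure N w"
    and "\<And>x k. x \<in> {1..N} \<Longrightarrow>
      path_measure w (path_ball N x (2*k+1)) \<le> C * path_measure w (path_ball N x k)"
  shows "doubling_const N w \<le> C"
  unfolding doubling_const_def
proof (rule cSup_least, safe)
  show False if "{path_measure w (path_ball N x (2*k+1)) / path_measure w (path_ball N x k)
    | x k. x \<in> {1..N}} = {}"
    using that assms(1) by auto
  fix x k assume "x \<in> {1..N}"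
  then show "path_measure w (path_ball N x (2*k+1)) / path_measure w (path_ball N x k) \<le> C"
    using assms(3) path_measure_ball_pos[OF assms(2)] by (simp add: pos_divide_le_eq)
qed

lemma one_le_doubling_const:
  assumes "1 \<le> N" "is_path_measure N w"
  shows "1 \<le> doubling_const N w"
proof -
  have x: "1 \<in> {1..N}" using assms by simp
  have "path_measure w (path_ball N 1 0) \<le> path_measure w (path_ball N 1 1)"
    using path_measure_mono[OF assms(2) path_ball_mono path_ball_subset] by simp
  also have "\<dots> \<le> doubling_const N w * path_measure w (path_ball N 1 0)"
    using path_measure_ball_le_doubling_const[OF assms(2) x, of 0] by simp
  finally show ?thesis
    using path_measure_ball_pos[OF assms(2) x, of 0] by simp
qed

lemma doubling_const_uniform_le_3:
  assumes "1 \<le> N"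
  shows "doubling_const N (\<lambda>_. 1) \<le> 3"
proof (rule doubling_const_le[OF assms])
  show "is_path_measure N (\<lambda>_. 1)" by (simp add: is_path_measure_def)
  have ball: "path_ball N x r = {max 1 (x-r)..min N (x+r)}" for x r
    unfolding path_ball_def by auto
  fix x k assume "x \<in> {1..N}"
  then have "Suc (min N (x+(2*k+1))) - max 1 (x-(2*k+1)) \<le> 3 * (Suc (min N (x+k)) - max 1 (x-k))"
    by (simp add: max_def min_def) arith
  then show "path_measure (\<lambda>_. 1) (path_ball N x (2*k+1)) \<le> 3 * path_measure (\<lambda>_. 1) (path_ball N x k)"
    unfolding path_measure_def ball by simp
qed

lemma zero_extension_skip:
  assumes "m \<in> {1..Suc n}"
  shows "zero_extension n (w \<circ> skip m) i = zero_extension (Suc n) w (skip m i)"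
  using assms by (auto simp: zero_extension_def skip_def)

lemma is_path_measure_skip:
  assumes "is_path_measure (Suc n) w" "m \<in> {1..Suc n}"
  shows "is_path_measure n (w \<circ> skip m)"
  using assms by (auto simp: is_path_measure_def skip_def)

lemma doubling_const_skip_m_le_M:
  assumes w: "is_path_measure (Suc n) w" and "1 \<le> n" and small: "doubling_const (Suc n) w \<le> 3"
    and m: "m \<in> {1..Suc n}" "\<And>i. i \<in> {1..Suc n} \<Longrightarrow> w i \<le> w m"
  shows "doubling_const n (w \<circ> skip m) \<le> doubling_const (Suc n) w"
proof (rule doubling_const_le)
  let ?V = "zero_extension (Suc n) w" and ?c = "doubling_const (Suc n) w"
  interpret small_doubling_weight "Suc n" ?V ?c m
  proof
    show "0 \<le> ?V i" for i
      using w by (auto simp: zero_extension_def is_path_measure_def less_imp_le)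
    show "i \<notin> {1..Suc n} \<Longrightarrow> ?V i = 0" for i
      by (auto simp: zero_extension_def)
    show "(\<Sum>i\<in>{z-(2*r+1)..z+(2*r+1)}. ?V i) \<le> ?c * (\<Sum>i\<in>{z-r..z+r}. ?V i)"
      if "z \<in> {1..Suc n}" for z r
      using path_measure_ball_le_doubling_const[OF w that, of r]
      by (simp add: path_measure_ball_eq_sum)
    show "?V i \<le> ?V m" for i
      using m w by (auto simp: zero_extension_def is_path_measure_def less_imp_le)
  qed (use small m in auto)
  have ball: "path_measure (w \<circ> skip m) (path_ball n x r)
    = (\<Sum>i\<in>{x-r..Suc (x+r)}. ?V i) - ?V (max (x-r) (min m (Suc (x+r))))" for x r
    using sum_skip[of "x-r" "Suc (x+r)" ?V m]
    by (simp add: path_measure_ball_eq_sum zero_extension_skip[OF m(1)]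
      atLeastLessThanSuc_atLeastAtMost del: sum.cl_ivl_Suc)
  fix x k assume "x \<in> {1..n}"
  then show "path_measure (w \<circ> skip m) (path_ball n x (2*k+1))
    \<le> ?c * path_measure (w \<circ> skip m) (path_ball n x k)"
    unfolding ball using doubling_without_max_ball[of x k] by simp
qed (use assms is_path_measure_skip in auto)

theorem proposition5p2:
  fixes n :: nat
  assumes "n \<ge> 1"
  shows "path_doubling_const n \<le> path_doubling_const (n + 1)"
  unfolding path_doubling_const_def
proof (rule cInf_mono)
  have uniform: "is_path_measure N (\<lambda>_. 1)" for N
    by (simp add: is_path_measure_def)
  then show "doubling_const (n + 1) ` {\<mu>. is_path_measure (n + 1) \<mu>} \<noteq> {}"
    by blast
  show "bdd_below (doubling_const n ` {\<mu>. is_path_measure n \<mu>})"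
    using one_le_doubling_const[OF assms] by (intro bdd_belowI[where m = 1]) auto
  fix d assume "d \<in> doubling_const (n + 1) ` {\<mu>. is_path_measure (n + 1) \<mu>}"
  then obtain w where w: "is_path_measure (Suc n) w" and d: "d = doubling_const (Suc n) w"
    by auto
  obtain m where m: "m \<in> {1..Suc n}" "\<And>i. i \<in> {1..Suc n} \<Longrightarrow> w i \<le> w m"
    using Max_in[of "w ` {1..Suc n}"] Max_ge[of "w ` {1..Suc n}"] by fastforce
  show "\<exists>a \<in> doubling_const n ` {\<mu>. is_path_measure n \<mu>}. a \<le> d"
  proof (cases "d \<le> 3")
    case True
    then show ?thesis
      using doubling_const_skip_m_le_M[OF w assms _ m] is_path_measure_skip[OF w m(1)] d by auto
  next
    case False
    then show ?thesis
      using doubling_const_uniform_le_3[OF assms] uniform by force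
  qed
qed

end
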